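(* Let $m\ge1$, $y\in\mathbb{R}^{2m+1}_+$ with $c:=\sqrt{\sum_{i=0}^{2m}y_i}>0$, and let $(x^t)_{t\ge0}$ be generated by $x^{t+1}=I(x^t)$, where $$I(x)_j=x_j\,\frac1c\sum_{\ell=0}^m\frac{x_\ell\,y_{\ell+j}}{(x*x)_{\ell+j}},\qquad j=0,\dots,m,$$ from an initial $x^0\in\mathbb{R}^{m+1}_+$. If $x^\infty$ is a limit point of the sequence $(x^t)$, then $x^\infty=I(x^\infty)$.
   Context: For $x\in\mathbb{R}^{m+1}$ set $x_k=0$ for $k<0$, $k>m$, and $(x*x)_i=\sum_{j=0}^i x_{i-j}x_j$ for $i=0,\dots,2m$. The iteration is assumed well-defined (denominators positive, e.g. $x^0>0$). *)

theory Defs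
  imports Complex_Main
begin

text \<open>Vectors x in R^(m+1) are represented as functions nat => real; only the
  entries 0..m are relevant.  zext m x k is x_k for k <= m and 0 otherwise.\<close>
definition zext :: "nat \<Rightarrow> (nat \<Rightarrow> real) \<Rightarrow> nat \<Rightarrow> real" where
  "zext m x k = (if k \<le> m then x k else 0)"

definition selfconv :: "nat \<Rightarrow> (nat \<Rightarrow> real) \<Rightarrow> nat \<Rightarrow> real" where
  "selfconv m x i = (\<Sum>j = 0..i. zext m x (i - j) * zext m x j)"

definition Imap :: "nat \<Rightarrow> (nat \<Rightarrow> real) \<Rightarrow> (nat \<Rightarrow> real) \<Rightarrow> nat \<Rightarrow> real" where
  "Imap m y x j =
     (if j \<le> m then
        x j * (1 / sqrt (\<Sum>i = 0..2*m. y i)) *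
          (\<Sum>l = 0..m. x l * y (l + j) / selfconv m x (l + j))
      else 0)"

fun iter :: "nat \<Rightarrow> (nat \<Rightarrow> real) \<Rightarrow> (nat \<Rightarrow> real) \<Rightarrow> nat \<Rightarrow> nat \<Rightarrow> real" where
  "iter m y x0 0 = x0"
| "iter m y x0 (Suc t) = Imap m y (iter m y x0 t)"

end

(* The iteration is a minorize-maximize scheme for L(x) = sum_k y_k ln (x*x)_k.
   Write I(x)_j = x_j B_j(x).  Since (I x * I x)_k / (x*x)_k is an average of the
   products B_{k-j} B_j, concavity of ln gives L(I x) - L(x) >= 2c sum_j x_j B_j ln B_j,
   and u ln u >= u - 1 + (sqrt u - 1)^2 together with sum_j x_j B_j = c bounds this
   below by 2c (c - sum_j x_j + D(x)), where D(x) = sum_j x_j (sqrt B_j - 1)^2.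
   From the first step on the iterates have mass c, so L increases by at least
   2c D(x^t); as L is bounded on such vectors, D(x^t) is summable and tends to 0.
   By continuity D(x^inf) = 0, i.e. B_j(x^inf) = 1 wherever x^inf_j > 0, which says
   x^inf = I(x^inf). *)
theory Submission
  imports Defs
begin

lemma weighted_sum_pos:
  fixes w u :: "'a \<Rightarrow> real"
  assumes "finite A" and w_nonneg: "\<And>j. j \<in> A \<Longrightarrow> w j \<ge> 0" and w_sum: "sum w A = 1"
    and u_pos: "\<And>j. j \<in> A \<Longrightarrow> w j > 0 \<Longrightarrow> u j > 0"
  shows "(\<Sum>j\<in>A. w j * u j) > 0"
proof -
  obtain j0 where j0: "j0 \<in> A" "w j0 > 0"
    using w_sum w_nonneg by (metis less_eq_real_def sum.neutral zero_neq_one)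
  have "w j * u j \<ge> 0" if "j \<in> A" for j
    using w_nonneg[OF that] u_pos[OF that] by (cases "w j = 0") auto
  then have "w j0 * u j0 \<le> (\<Sum>j\<in>A. w j * u j)"
    using \<open>finite A\<close> j0 by (intro member_le_sum) auto
  moreover have "0 < w j0 * u j0" using j0 u_pos by simp
  ultimately show ?thesis by linarith
qed

lemma weighted_ln_le_ln_weighted_sum:
  fixes w u :: "'a \<Rightarrow> real"
  assumes "finite A" and w_nonneg: "\<And>j. j \<in> A \<Longrightarrow> w j \<ge> 0" and w_sum: "sum w A = 1"
    and u_pos: "\<And>j. j \<in> A \<Longrightarrow> w j > 0 \<Longrightarrow> u j > 0"
  shows "(\<Sum>j\<in>A. w j * ln (u j)) \<le> ln (\<Sum>j\<in>A. w j * u j)"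
proof -
  define S where "S = (\<Sum>j\<in>A. w j * u j)"
  have S_pos: "S > 0" unfolding S_def using assms by (rule weighted_sum_pos)
  \<comment> \<open>tangent line of the concave function ln at S\<close>
  have "w j * ln (u j) \<le> w j * (ln S + u j / S - 1)" if "j \<in> A" for j
  proof (cases "w j = 0")
    case False
    then have "u j > 0" using that w_nonneg u_pos by (simp add: order_less_le)
    then have "ln (u j / S) \<le> u j / S - 1" using S_pos by (intro ln_le_minus_one) simp
    then have "ln (u j) \<le> ln S + u j / S - 1" using \<open>u j > 0\<close> S_pos by (simp add: ln_div)
    then show ?thesis using w_nonneg[OF that] by (rule mult_left_mono)
  qed simp
  then have "(\<Sum>j\<in>A. w j * ln (u j)) \<le> (\<Sum>j\<in>A. ln S * w j + w j * u j / S - w j)"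
    by (intro sum_mono) (simp add: algebra_simps)
  also have "\<dots> = ln S"
    using w_sum S_pos by (simp add: sum.distrib sum_subtractf
        flip: sum_distrib_left sum_divide_distrib S_def)
  finally show ?thesis unfolding S_def .
qed

lemma mult_ln_self_ge:
  fixes u :: real
  assumes "u \<ge> 0"
  shows "u - 1 + (sqrt u - 1)\<^sup>2 \<le> u * ln u"
proof (cases "u = 0")
  case False
  define s where "s = sqrt u"
  have s: "s > 0" "s\<^sup>2 = u" using assms False by (auto simp: s_def)
  have "ln (1 / s) \<le> 1 / s - 1" using s by (intro ln_le_minus_one) simp
  then have ln_s: "1 - 1 / s \<le> ln s" using s by (simp add: ln_div)
  have "u - 1 + (sqrt u - 1)\<^sup>2 = 2 * s\<^sup>2 * (1 - 1 / s)"
    using s by (simp add: s_def[symmetric] power2_eq_square field_simps)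
  also have "\<dots> \<le> 2 * s\<^sup>2 * ln s" using ln_s by (intro mult_left_mono) auto
  also have "\<dots> = u * ln u" using s ln_realpow[of s 2] by simp
  finally show ?thesis .
qed simp

lemma sum_antidiagonals_eq_sum_square:
  fixes G :: "nat \<Rightarrow> nat \<Rightarrow> 'a::comm_monoid_add"
  assumes "\<And>l j. m < l \<or> m < j \<Longrightarrow> G l j = 0"
  shows "(\<Sum>k = 0..2*m. \<Sum>j = 0..k. G (k - j) j) = (\<Sum>l = 0..m. \<Sum>j = 0..m. G l j)"
proof -
  have fin: "finite {(i, j). (i::nat) + j \<le> 2*m}"
    by (rule finite_subset[of _ "{0..2*m} \<times> {0..2*m}"]) auto
  have "(\<Sum>k = 0..2*m. \<Sum>j = 0..k. G (k - j) j) = (\<Sum>(i, j)\<in>{(i, j). i + j \<le> 2*m}. G j i)"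
    using sum.triangle_reindex_eq[of "\<lambda>i j. G j i" "2*m"] by (simp add: atLeast0AtMost)
  also have "\<dots> = (\<Sum>(i, j)\<in>{0..m} \<times> {0..m}. G j i)"
    using fin assms by (intro sum.mono_neutral_right) (auto, (meson not_le)+)
  also have "\<dots> = (\<Sum>i = 0..m. \<Sum>j = 0..m. G j i)"
    by (simp add: sum.cartesian_product)
  also have "\<dots> = (\<Sum>l = 0..m. \<Sum>j = 0..m. G l j)"
    by (rule sum.swap)
  finally show ?thesis .
qed

definition Ifactor :: "nat \<Rightarrow> (nat \<Rightarrow> real) \<Rightarrow> (nat \<Rightarrow> real) \<Rightarrow> nat \<Rightarrow> real" where
  "Ifactor m y x j =
     (1 / sqrt (\<Sum>i = 0..2*m. y i)) * (\<Sum>l = 0..m. x l * y (l + j) / selfconv m x (l + j))"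

definition pair_weight :: "nat \<Rightarrow> (nat \<Rightarrow> real) \<Rightarrow> (nat \<Rightarrow> real) \<Rightarrow> nat \<Rightarrow> nat \<Rightarrow> real" where
  "pair_weight m y x l j = zext m x l * zext m x j * y (l + j) / selfconv m x (l + j)"

definition loglik :: "nat \<Rightarrow> (nat \<Rightarrow> real) \<Rightarrow> (nat \<Rightarrow> real) \<Rightarrow> real" where
  "loglik m y x = (\<Sum>k = 0..2*m. y k * ln (selfconv m x k))"

definition fixpoint_defect :: "nat \<Rightarrow> (nat \<Rightarrow> real) \<Rightarrow> (nat \<Rightarrow> real) \<Rightarrow> real" where
  "fixpoint_defect m y x = (\<Sum>j = 0..m. x j * (sqrt (Ifactor m y x j) - 1)\<^sup>2)"

lemma Imap_eq_mult_Ifactor: "j \<le> m \<Longrightarrow> Imap m y x j = x j * Ifactor m y x j"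
  by (simp add: Imap_def Ifactor_def mult.assoc)

lemma zext_Imap: "zext m (Imap m y x) i = zext m x i * Ifactor m y x i"
  by (simp add: zext_def Imap_eq_mult_Ifactor)

lemma pair_weight_sym: "pair_weight m y x l j = pair_weight m y x j l"
  by (simp add: pair_weight_def add.commute mult.commute)

lemma pair_weight_eq_0: "m < l \<or> m < j \<Longrightarrow> pair_weight m y x l j = 0"
  by (auto simp: pair_weight_def zext_def)

locale em_data =
  fixes m :: nat and y :: "nat \<Rightarrow> real"
  assumes y_nonneg: "\<And>i. i \<le> 2*m \<Longrightarrow> 0 \<le> y i"
    and c_pos: "0 < sqrt (\<Sum>i = 0..2*m. y i)"
begin

abbreviation c :: real where "c \<equiv> sqrt (\<Sum>i = 0..2*m. y i)"

end

locale em_point = em_data +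
  fixes x :: "nat \<Rightarrow> real"
  assumes x_nonneg: "\<And>j. j \<le> m \<Longrightarrow> 0 \<le> x j"
    and selfconv_pos: "\<And>k. k \<le> 2*m \<Longrightarrow> 0 < selfconv m x k"
begin

lemma zext_nonneg: "0 \<le> zext m x i"
  using x_nonneg by (simp add: zext_def)

lemma Ifactor_nonneg: "j \<le> m \<Longrightarrow> 0 \<le> Ifactor m y x j"
  unfolding Ifactor_def using y_nonneg x_nonneg selfconv_pos c_pos
  by (intro mult_nonneg_nonneg sum_nonneg divide_nonneg_nonneg) (auto intro: less_imp_le)

lemma Imap_nonneg: "j \<le> m \<Longrightarrow> 0 \<le> Imap m y x j"
  by (simp add: Imap_eq_mult_Ifactor x_nonneg Ifactor_nonneg)

lemma Ifactor_pos:
  assumes "l \<le> m" "j \<le> m" "0 < x l" "0 < y (l + j)"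
  shows "0 < Ifactor m y x j"
proof -
  have "0 < x l * y (l + j) / selfconv m x (l + j)" using assms selfconv_pos by simp
  also have "\<dots> \<le> (\<Sum>l = 0..m. x l * y (l + j) / selfconv m x (l + j))"
    using assms y_nonneg x_nonneg selfconv_pos
    by (intro member_le_sum) (auto intro!: divide_nonneg_nonneg mult_nonneg_nonneg simp: less_imp_le)
  finally show ?thesis unfolding Ifactor_def using c_pos by simp
qed

lemma sum_pair_weight_column:
  assumes "j \<le> m"
  shows "(\<Sum>l = 0..m. pair_weight m y x l j) = c * x j * Ifactor m y x j"
  unfolding Ifactor_def pair_weight_def using assms c_pos
  by (simp add: sum_distrib_left zext_def mult_ac)

lemma sum_pair_weight_antidiagonal:
  assumes "k \<le> 2*m"
  shows "(\<Sum>j = 0..k. pair_weight m y x (k - j) j) = y k"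
proof -
  have "(\<Sum>j = 0..k. pair_weight m y x (k - j) j) = selfconv m x k * y k / selfconv m x k"
    unfolding selfconv_def pair_weight_def by (simp add: sum_divide_distrib sum_distrib_right)
  then show ?thesis using selfconv_pos[OF assms] by simp
qed

lemma sum_mult_Ifactor: "(\<Sum>j = 0..m. x j * Ifactor m y x j) = c"
proof -
  have "c * (\<Sum>j = 0..m. x j * Ifactor m y x j) = (\<Sum>l = 0..m. \<Sum>j = 0..m. pair_weight m y x l j)"
    by (subst sum.swap) (simp add: sum_distrib_left sum_pair_weight_column mult.assoc)
  also have "\<dots> = (\<Sum>k = 0..2*m. y k)"
    by (simp add: sum_pair_weight_antidiagonal pair_weight_eq_0
        flip: sum_antidiagonals_eq_sum_square)
  also have "\<dots> = c * c"
    using sum_nonneg[of "{0..2*m}" y] y_nonneg by simp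
  finally show ?thesis using c_pos by (metis mult_cancel_left less_irrefl)
qed

lemma selfconv_Imap_ln_ascent:
  assumes k: "k \<le> 2*m"
  shows "(\<Sum>j = 0..k. pair_weight m y x (k - j) j *
            (ln (Ifactor m y x (k - j)) + ln (Ifactor m y x j)))
         \<le> y k * (ln (selfconv m (Imap m y x) k) - ln (selfconv m x k))"
proof (cases "y k = 0")
  case True
  then show ?thesis by (simp add: pair_weight_def)
next
  case False
  then have yk: "0 < y k" using y_nonneg[OF k] by simp
  define Q where "Q = selfconv m x k"
  have Q: "0 < Q" unfolding Q_def using selfconv_pos[OF k] .
  define B where "B = Ifactor m y x"
  define w where "w j = zext m x (k - j) * zext m x j / Q" for j
  define u where "u j = B (k - j) * B j" for j
  have w_nonneg: "0 \<le> w j" for j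
    unfolding w_def using Q zext_nonneg by simp
  have w_sum: "sum w {0..k} = 1"
    unfolding w_def using Q by (simp add: Q_def selfconv_def flip: sum_divide_distrib)
  have u_pos: "0 < B (k - j) \<and> 0 < B j" if "j \<in> {0..k}" "0 < w j" for j
  proof -
    have "zext m x (k - j) \<noteq> 0" "zext m x j \<noteq> 0"
      using \<open>0 < w j\<close> by (auto simp: w_def)
    then have "k - j \<le> m" "j \<le> m" "0 < x (k - j)" "0 < x j"
      using x_nonneg by (auto simp: zext_def order_less_le split: if_splits)
    then show ?thesis
      using that yk Ifactor_pos[of "k - j" j] Ifactor_pos[of j "k - j"] by (simp add: B_def)
  qed
  have pair_weight_eq:
    "pair_weight m y x (k - j) j * (ln (B (k - j)) + ln (B j)) = y k * (w j * ln (u j))"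
    if "j \<in> {0..k}" for j
  proof (cases "w j = 0")
    case True
    then show ?thesis using that Q by (auto simp: pair_weight_def w_def Q_def)
  next
    case False
    then have "0 < B (k - j)" "0 < B j"
      using that u_pos[OF that] w_nonneg[of j] by auto
    then show ?thesis
      using that by (simp add: pair_weight_def w_def Q_def u_def ln_mult)
  qed
  have selfconv_Imap: "selfconv m (Imap m y x) k = Q * (\<Sum>j = 0..k. w j * u j)"
    unfolding selfconv_def zext_Imap sum_distrib_left
    using Q by (intro sum.cong) (auto simp: w_def u_def B_def)
  have "(\<Sum>j = 0..k. pair_weight m y x (k - j) j * (ln (B (k - j)) + ln (B j)))
      = y k * (\<Sum>j = 0..k. w j * ln (u j))"
    by (simp add: pair_weight_eq sum_distrib_left)
  also have "\<dots> \<le> y k * ln (\<Sum>j = 0..k. w j * u j)"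
    using yk w_nonneg w_sum u_pos
    by (intro mult_left_mono weighted_ln_le_ln_weighted_sum) (auto simp: u_def)
  also have "\<dots> = y k * (ln (selfconv m (Imap m y x) k) - ln Q)"
    using Q w_nonneg w_sum u_pos weighted_sum_pos[of "{0..k}" w u]
    by (simp add: selfconv_Imap ln_mult u_def)
  finally show ?thesis by (simp add: B_def Q_def)
qed

lemma loglik_Imap_ascent:
  "2 * c * (\<Sum>j = 0..m. x j * Ifactor m y x j * ln (Ifactor m y x j))
     \<le> loglik m y (Imap m y x) - loglik m y x"
proof -
  define B where "B = Ifactor m y x"
  define P where "P = pair_weight m y x"
  have column:
    "(\<Sum>l = 0..m. \<Sum>j = 0..m. P l j * ln (B j)) = c * (\<Sum>j = 0..m. x j * B j * ln (B j))"
    by (subst sum.swap)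
       (simp add: P_def B_def sum_distrib_left sum_pair_weight_column mult.assoc flip: sum_distrib_right)
  have symmetry:
    "(\<Sum>l = 0..m. \<Sum>j = 0..m. P l j * ln (B l)) = (\<Sum>l = 0..m. \<Sum>j = 0..m. P l j * ln (B j))"
    by (subst sum.swap) (simp add: P_def pair_weight_sym)
  have "2 * c * (\<Sum>j = 0..m. x j * B j * ln (B j))
      = (\<Sum>l = 0..m. \<Sum>j = 0..m. P l j * (ln (B l) + ln (B j)))"
    by (simp add: distrib_left sum.distrib symmetry column)
  also have "\<dots> = (\<Sum>k = 0..2*m. \<Sum>j = 0..k. P (k - j) j * (ln (B (k - j)) + ln (B j)))"
    by (rule sum_antidiagonals_eq_sum_square[symmetric]) (simp add: P_def pair_weight_eq_0)
  also have "\<dots> \<le> (\<Sum>k = 0..2*m. y k * (ln (selfconv m (Imap m y x) k) - ln (selfconv m x k)))"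
    unfolding P_def B_def by (intro sum_mono selfconv_Imap_ln_ascent) simp
  also have "\<dots> = loglik m y (Imap m y x) - loglik m y x"
    by (simp add: loglik_def right_diff_distrib sum_subtractf)
  finally show ?thesis by (simp add: B_def)
qed

lemma loglik_Imap_ascent_defect:
  "2 * c * (c - (\<Sum>j = 0..m. x j) + fixpoint_defect m y x)
     \<le> loglik m y (Imap m y x) - loglik m y x"
proof -
  define B where "B = Ifactor m y x"
  have "c - (\<Sum>j = 0..m. x j) + fixpoint_defect m y x
      = (\<Sum>j = 0..m. x j * (B j - 1 + (sqrt (B j) - 1)\<^sup>2))"
    unfolding sum_mult_Ifactor[symmetric] fixpoint_defect_def B_def
    by (simp add: sum_subtractf algebra_simps flip: sum.distrib)
  also have "\<dots> \<le> (\<Sum>j = 0..m. x j * (B j * ln (B j)))"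
    using x_nonneg Ifactor_nonneg mult_ln_self_ge
    by (intro sum_mono mult_left_mono) (auto simp: B_def)
  finally have "2 * c * (c - (\<Sum>j = 0..m. x j) + fixpoint_defect m y x)
      \<le> 2 * c * (\<Sum>j = 0..m. x j * B j * ln (B j))"
    using c_pos by (simp add: mult.assoc)
  also have "\<dots> \<le> loglik m y (Imap m y x) - loglik m y x"
    unfolding B_def by (rule loglik_Imap_ascent)
  finally show ?thesis .
qed

lemma Imap_eq_self_if_fixpoint_defect_eq_0:
  assumes "fixpoint_defect m y x = 0" "j \<le> m"
  shows "Imap m y x j = x j"
proof -
  have "x j * (sqrt (Ifactor m y x j) - 1)\<^sup>2 = 0"
    using assms x_nonneg unfolding fixpoint_defect_def by (subst (asm) sum_nonneg_eq_0_iff) auto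
  then have "x j = 0 \<or> Ifactor m y x j = 1"
    using Ifactor_nonneg[OF \<open>j \<le> m\<close>] by auto
  then show ?thesis using \<open>j \<le> m\<close> by (auto simp: Imap_eq_mult_Ifactor)
qed

end

lemma tendsto_fixpoint_defect:
  assumes lim: "\<And>j. j \<le> m \<Longrightarrow> ((\<lambda>n. f n j) \<longlongrightarrow> x j) F"
    and selfconv_nz: "\<And>k. k \<le> 2*m \<Longrightarrow> selfconv m x k \<noteq> 0"
  shows "((\<lambda>n. fixpoint_defect m y (f n)) \<longlongrightarrow> fixpoint_defect m y x) F"
proof -
  have "((\<lambda>n. zext m (f n) i) \<longlongrightarrow> zext m x i) F" for i
    by (cases "i \<le> m") (simp_all add: zext_def lim)
  then have "((\<lambda>n. selfconv m (f n) k) \<longlongrightarrow> selfconv m x k) F" for k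
    unfolding selfconv_def by (intro tendsto_intros)
  then have "((\<lambda>n. Ifactor m y (f n) j) \<longlongrightarrow> Ifactor m y x j) F" if "j \<le> m" for j
    unfolding Ifactor_def using that selfconv_nz
    by (intro tendsto_intros lim) auto
  then show ?thesis
    unfolding fixpoint_defect_def by (intro tendsto_intros lim) auto
qed

locale em_run = em_data +
  fixes x0 :: "nat \<Rightarrow> real"
  assumes x0_nonneg: "\<And>j. j \<le> m \<Longrightarrow> 0 \<le> x0 j"
    and selfconv_iter_pos: "\<And>t k. k \<le> 2*m \<Longrightarrow> 0 < selfconv m (iter m y x0 t) k"
begin

lemma em_point_iter: "em_point m y (iter m y x0 t)"
proof (induction t)
  case 0
  show ?case
    using em_data_axioms x0_nonneg selfconv_iter_pos[of _ 0]
    by (simp add: em_point_def em_point_axioms_def)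
next
  case (Suc t)
  show ?case
    using em_data_axioms em_point.Imap_nonneg[OF Suc] selfconv_iter_pos[of _ "Suc t"]
    by (simp add: em_point_def em_point_axioms_def)
qed

lemma iter_nonneg: "j \<le> m \<Longrightarrow> 0 \<le> iter m y x0 t j"
  by (rule em_point.x_nonneg[OF em_point_iter])

lemma sum_iter_Suc: "(\<Sum>j = 0..m. iter m y x0 (Suc t) j) = c"
  using em_point.sum_mult_Ifactor[OF em_point_iter[of t]]
  by (simp add: Imap_eq_mult_Ifactor)

lemma loglik_iter_Suc_le:
  "loglik m y (iter m y x0 (Suc t)) \<le> (\<Sum>k = 0..2*m. y k * ln ((2*m + 1) * c\<^sup>2))"
  unfolding loglik_def
proof (intro sum_mono mult_left_mono)
  fix k assume "k \<in> {0..2*m}"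
  then have k: "k \<le> 2*m" by simp
  then show "0 \<le> y k" by (rule y_nonneg)
  define x where "x = iter m y x0 (Suc t)"
  have zext_bounds: "0 \<le> zext m x i" "zext m x i \<le> c" for i
  proof -
    show "0 \<le> zext m x i"
      unfolding x_def by (rule em_point.zext_nonneg[OF em_point_iter])
    have "x i \<le> (\<Sum>j = 0..m. x j)" if "i \<le> m"
      unfolding x_def using that by (intro member_le_sum iter_nonneg) auto
    then show "zext m x i \<le> c"
      using c_pos sum_iter_Suc by (auto simp: zext_def x_def)
  qed
  have selfconv_pos: "0 < selfconv m x k"
    unfolding x_def by (rule selfconv_iter_pos[OF k])
  have "selfconv m x k \<le> (\<Sum>j = 0..k. c * c)"
    unfolding selfconv_def using zext_bounds c_pos by (intro sum_mono mult_mono) auto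
  also have "\<dots> \<le> (2*m + 1) * c\<^sup>2"
    using k by (simp add: power2_eq_square mult_right_mono)
  finally show "ln (selfconv m x k) \<le> ln ((2*m + 1) * c\<^sup>2)"
    using selfconv_pos by simp
qed

lemma fixpoint_defect_iter_Suc_le:
  "2 * c * fixpoint_defect m y (iter m y x0 (Suc t))
     \<le> loglik m y (iter m y x0 (Suc (Suc t))) - loglik m y (iter m y x0 (Suc t))"
  using em_point.loglik_Imap_ascent_defect[OF em_point_iter[of "Suc t"]] sum_iter_Suc[of t]
  by simp

lemma fixpoint_defect_iter_tendsto_0: "(\<lambda>t. fixpoint_defect m y (iter m y x0 t)) \<longlonglongrightarrow> 0"
proof -
  define L where "L t = loglik m y (iter m y x0 (Suc t))" for t
  define D where "D t = fixpoint_defect m y (iter m y x0 (Suc t))" for t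
  have D_nonneg: "0 \<le> D t" for t
    unfolding D_def fixpoint_defect_def
    by (intro sum_nonneg mult_nonneg_nonneg iter_nonneg zero_le_power2) simp
  have "(\<Sum>t<n. D t) \<le> (\<Sum>t<n. (L (Suc t) - L t) / (2 * c))" for n
    using fixpoint_defect_iter_Suc_le c_pos
    by (intro sum_mono) (simp add: D_def L_def field_simps)
  also have "\<dots> n = (L n - L 0) / (2 * c)" for n
    by (simp add: sum_lessThan_telescope flip: sum_divide_distrib)
  also have "\<dots> n \<le> ((\<Sum>k = 0..2*m. y k * ln ((2*m + 1) * c\<^sup>2)) - L 0) / (2 * c)" for n
    using loglik_iter_Suc_le c_pos by (intro divide_right_mono) (simp_all add: L_def)
  finally have "summable D"
    using D_nonneg by (intro summableI_nonneg_bounded)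
  then have "D \<longlonglongrightarrow> 0" by (rule summable_LIMSEQ_zero)
  then show ?thesis unfolding D_def by (rule LIMSEQ_imp_Suc)
qed

end

theorem lemma4:
  fixes m :: nat and y x0 xinf :: "nat \<Rightarrow> real"
  assumes m: "m \<ge> 1"
    and y_nonneg: "\<forall>i \<le> 2*m. y i \<ge> 0"
    and c_pos: "sqrt (\<Sum>i = 0..2*m. y i) > 0"
    and x0_nonneg: "\<forall>j \<le> m. x0 j \<ge> 0"
    and welldef: "\<forall>t. \<forall>k \<le> 2*m. selfconv m (iter m y x0 t) k > 0"
    and welldef_lim: "\<forall>k \<le> 2*m. selfconv m xinf k > 0"
    and limpt: "\<exists>r. strict_mono r \<and>
                 (\<forall>j \<le> m. (\<lambda>t. iter m y x0 (r t) j) \<longlonglongrightarrow> xinf j)"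
  shows "\<forall>j \<le> m. xinf j = Imap m y xinf j"
proof -
  interpret em_run m y x0
    using y_nonneg c_pos x0_nonneg welldef by unfold_locales auto
  obtain r where r: "strict_mono r"
    and lim: "\<And>j. j \<le> m \<Longrightarrow> (\<lambda>t. iter m y x0 (r t) j) \<longlonglongrightarrow> xinf j"
    using limpt by blast
  have "0 \<le> xinf j" if "j \<le> m" for j
    using lim[OF that] by (rule LIMSEQ_le_const) (auto intro: iter_nonneg[OF that])
  then interpret limit: em_point m y xinf
    using welldef_lim by unfold_locales auto
  have "(\<lambda>t. fixpoint_defect m y (iter m y x0 (r t))) \<longlonglongrightarrow> 0"
    using LIMSEQ_subseq_LIMSEQ[OF fixpoint_defect_iter_tendsto_0 r] by (simp add: comp_def)
  moreover have "(\<lambda>t. fixpoint_defect m y (iter m y x0 (r t))) \<longlonglongrightarrow> fixpoint_defect m y xinf"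
    using lim limit.selfconv_pos by (intro tendsto_fixpoint_defect) (auto simp: less_imp_neq[symmetric])
  ultimately have "fixpoint_defect m y xinf = 0"
    using LIMSEQ_unique by blast
  then show ?thesis
    using limit.Imap_eq_self_if_fixpoint_defect_eq_0 by simp
qed

end
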